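(* Assume in addition that $G$ is commutative. Then there exists $C>0$ such that $C\,\|\nabla\phi(x)\|^{4/3}\ge\phi(x)$ for all $x\in\mathbb{R}^N$.
   Context: Let $G$ be a closed subgroup of $GL(N,\mathbb{R})$ invariant under transpose $g\mapsto g^{*}$, and $\mathfrak p=\{X\in\mathrm{Lie}(G):X^{*}=X\}$. Equip $M_N(\mathbb{R})$ with the inner product $\mathrm{tr}(XY^{*})$, let $X_1,\dots,X_n$ be an orthonormal basis of $\mathfrak p$, and set $\phi(x)=\sum_{i=1}^n\langle X_ix,x\rangle^2$ for $x\in\mathbb{R}^N$ (standard inner product), so that $\nabla\phi(x)=4\sum_i\langle X_ix,x\rangle X_ix$ ($\nabla$ the Euclidean gradient). *)

theory Defs
  imports "HOL-Analysis.Analysis"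
begin

type_synonym 'n mat = "real ^ 'n ^ 'n"

text \<open>Matrix powers and the matrix exponential (the generic exp on vec types
is componentwise, so it is not the matrix exponential).\<close>
primrec mat_pow :: "'n::finite mat \<Rightarrow> nat \<Rightarrow> 'n mat" where
  "mat_pow A 0 = mat 1"
| "mat_pow A (Suc k) = A ** mat_pow A k"

definition mat_exp :: "'n::finite mat \<Rightarrow> 'n mat" where
  "mat_exp A = (\<Sum>k. (1 / fact k) *\<^sub>R mat_pow A k)"

definition GL :: "'n::finite mat set" where
  "GL = {A. invertible A}"

definition closed_subgroup_GL :: "'n::finite mat set \<Rightarrow> bool" where
  "closed_subgroup_GL G \<longleftrightarrow> G \<subseteq> GL \<and> mat 1 \<in> G
     \<and> (\<forall>A\<in>G. \<forall>B\<in>G. A ** B \<in> G) \<and> (\<forall>A\<in>G. matrix_inv A \<in> G)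
     \<and> closedin (top_of_set GL) G"

definition lie_alg :: "'n::finite mat set \<Rightarrow> 'n mat set" where
  "lie_alg G = {X. \<forall>t::real. mat_exp (t *\<^sub>R X) \<in> G}"

definition sym_part :: "'n::finite mat set \<Rightarrow> 'n mat set" where
  "sym_part G = {X \<in> lie_alg G. transpose X = X}"

text \<open>Orthonormal basis w.r.t. tr(XY^*), which is the inner product on real^'n^'n.\<close>
definition orthonormal_basis :: "'n::finite mat set \<Rightarrow> 'n mat set \<Rightarrow> bool" where
  "orthonormal_basis B V \<longleftrightarrow> B \<subseteq> V \<and> span B = V \<and> pairwise orthogonal B
     \<and> (\<forall>X\<in>B. norm X = 1)"

definition phi :: "'n::finite mat set \<Rightarrow> real ^ 'n \<Rightarrow> real" where
  "phi B x = (\<Sum>X\<in>B. ((X *v x) \<bullet> x) ^ 2)"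

text \<open>Euclidean gradient of phi (explicit formula given in the paper).\<close>
definition grad_phi :: "'n::finite mat set \<Rightarrow> real ^ 'n \<Rightarrow> real ^ 'n" where
  "grad_phi B x = 4 *\<^sub>R (\<Sum>X\<in>B. ((X *v x) \<bullet> x) *\<^sub>R (X *v x))"

end

theory Submission
  imports Defs
begin

(* Commutativity of G makes its Lie algebra commutative (differentiate s |-> exp(s Y) at 0),
   so the symmetric basis matrices X in B have a common orthonormal eigenbasis e_1, ..., e_N.
   With z_j = <x, e_j>^2 >= 0 one gets <X x, x> = sum_j lambda_X(j) z_j, hence
   phi(x) = |f z|^2 for the linear map f z = sum_X (sum_j lambda_X(j) z_j) X, and
   |grad phi(x)|^2 = 16 sum_j <f z, f e_j>^2 z_j. It therefore suffices to show
   |f z|^3 <= C sum_j <f z, f e_j>^2 z_j on the positive orthant for an arbitrary linear f.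
   A Caratheodory argument replaces z by some z' >= 0 with f z' = f z, on whose support f is
   injective, without increasing the right-hand side; then |f z|^2 = sum_j z'_j <f z, f e_j>,
   Cauchy-Schwarz, and sum_j z'_j = O(|f z|) give the bound. *)

section \<open>The matrix exponential and commutativity of the Lie algebra\<close>

lemma norm_matrix_mult_le:
  fixes A :: "real^'n^'m" and B :: "real^'p^'n"
  shows "norm (A ** B) \<le> norm A * norm B"
proof -
  have norm_sq: "(norm M)\<^sup>2 = (\<Sum>i\<in>UNIV. \<Sum>j\<in>UNIV. (M $ i $ j)\<^sup>2)" for M :: "real^'q^'r"
    unfolding power2_norm_eq_inner inner_vec_def inner_real_def by (simp add: power2_eq_square)
  have entry: "(A ** B) $ i $ j = A $ i \<bullet> column j B" for i j
    by (simp add: matrix_matrix_mult_def inner_vec_def column_def)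
  have "(norm (A ** B))\<^sup>2 = (\<Sum>i\<in>UNIV. \<Sum>j\<in>UNIV. (A $ i \<bullet> column j B)\<^sup>2)"
    by (simp only: norm_sq entry)
  also have "\<dots> \<le> (\<Sum>i\<in>UNIV. \<Sum>j\<in>UNIV. (A $ i \<bullet> A $ i) * (column j B \<bullet> column j B))"
    by (intro sum_mono Cauchy_Schwarz_ineq)
  also have "\<dots> = (\<Sum>i\<in>UNIV. A $ i \<bullet> A $ i) * (\<Sum>j\<in>UNIV. column j B \<bullet> column j B)"
    by (simp add: sum_product)
  also have "(\<Sum>i\<in>UNIV. A $ i \<bullet> A $ i) = (norm A)\<^sup>2"
    by (simp add: power2_norm_eq_inner inner_vec_def)
  also have "(\<Sum>j\<in>UNIV. column j B \<bullet> column j B) = (\<Sum>j\<in>UNIV. \<Sum>k\<in>UNIV. (B $ k $ j)\<^sup>2)"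
    by (simp add: column_def inner_vec_def power2_eq_square)
  also have "\<dots> = (norm B)\<^sup>2"
    unfolding norm_sq by (rule sum.swap)
  finally have "(norm (A ** B))\<^sup>2 \<le> (norm A * norm B)\<^sup>2"
    by (simp add: power_mult_distrib)
  then show ?thesis
    by (rule power2_le_imp_le) simp
qed

lemma mat_pow_scaleR: "mat_pow (t *\<^sub>R X) k = t ^ k *\<^sub>R mat_pow X k"
  by (induction k) (simp_all add: matrix_scalar_ac flip: scalar_matrix_assoc)

lemma norm_mat_pow_le:
  fixes X :: "'n::finite mat"
  shows "norm (mat_pow X k) \<le> norm (mat 1 :: 'n::finite mat) * norm X ^ k"
proof (induction k)
  case (Suc k)
  have "norm (mat_pow X (Suc k)) \<le> norm X * norm (mat_pow X k)"
    by (simp add: norm_matrix_mult_le)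
  also have "\<dots> \<le> norm X * (norm (mat 1 :: 'n mat) * norm X ^ k)"
    by (intro mult_left_mono Suc) simp
  finally show ?case
    by (simp add: algebra_simps)
qed simp

lemma norm_mat_exp_term_le:
  fixes X :: "'n::finite mat"
  shows "norm ((t ^ k / fact k) *\<^sub>R mat_pow X k)
     \<le> norm (mat 1 :: 'n::finite mat) * (inverse (fact k) * (\<bar>t\<bar> * norm X) ^ k)"
proof -
  have "norm ((t ^ k / fact k) *\<^sub>R mat_pow X k) = \<bar>t\<bar> ^ k / fact k * norm (mat_pow X k)"
    by (simp add: power_abs)
  also have "\<dots> \<le> \<bar>t\<bar> ^ k / fact k * (norm (mat 1 :: 'n mat) * norm X ^ k)"
    by (intro mult_left_mono norm_mat_pow_le) simp
  finally show ?thesis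
    by (simp add: power_mult_distrib divide_inverse algebra_simps)
qed

lemma summable_mat_exp_series:
  "summable (\<lambda>k. (t ^ k / fact k) *\<^sub>R mat_pow (X :: 'n::finite mat) k)"
  by (rule summable_comparison_test'[OF summable_mult[OF summable_exp] norm_mat_exp_term_le])

lemma norm_mat_exp_term_le_square:
  fixes X :: "'n::finite mat"
  assumes "\<bar>t\<bar> \<le> 1"
  shows "norm ((t ^ (n + 2) / fact (n + 2)) *\<^sub>R mat_pow X (n + 2))
     \<le> t\<^sup>2 * (norm (mat 1 :: 'n mat) * (inverse (fact (n + 2)) * norm X ^ (n + 2)))"
proof -
  have "\<bar>t\<bar> ^ (n + 2) = \<bar>t\<bar> ^ n * t\<^sup>2"
    by (simp only: power_add power2_abs)
  also have "\<dots> \<le> t\<^sup>2"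
    using power_le_one[OF abs_ge_zero assms] by (simp add: mult_left_le_one_le)
  finally have "\<bar>t\<bar> ^ (n + 2) \<le> t\<^sup>2" .
  then have "norm (mat 1 :: 'n mat) * (inverse (fact (n + 2)) * norm X ^ (n + 2)) * \<bar>t\<bar> ^ (n + 2)
      \<le> norm (mat 1 :: 'n mat) * (inverse (fact (n + 2)) * norm X ^ (n + 2)) * t\<^sup>2"
    by (intro mult_left_mono) simp_all
  with norm_mat_exp_term_le[of t "n + 2" X] show ?thesis
    by (simp add: power_mult_distrib mult_ac)
qed

lemma norm_mat_exp_remainder_le:
  fixes X :: "'n::finite mat"
  obtains K where "\<And>t. \<bar>t\<bar> \<le> 1 \<Longrightarrow> norm (mat_exp (t *\<^sub>R X) - mat 1 - t *\<^sub>R X) \<le> t\<^sup>2 * K"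
proof
  define g where "g n = norm (mat 1 :: 'n mat) * (inverse (fact (n + 2)) * norm X ^ (n + 2))" for n
  have "summable g"
    unfolding g_def by (intro summable_mult summable_ignore_initial_segment[where k = 2] summable_exp)
  fix t :: real
  assume t: "\<bar>t\<bar> \<le> 1"
  define a where "a k = (t ^ k / fact k) *\<^sub>R mat_pow X k" for k
  have "mat_exp (t *\<^sub>R X) = (\<Sum>n. a (n + 2)) + (\<Sum>k<2. a k)"
    unfolding mat_exp_def mat_pow_scaleR
    using suminf_split_initial_segment[OF summable_mat_exp_series, of t X 2] by (simp add: a_def)
  also have "(\<Sum>k<2. a k) = mat 1 + t *\<^sub>R X"
    by (simp add: a_def numeral_2_eq_2)
  finally have remainder: "mat_exp (t *\<^sub>R X) - mat 1 - t *\<^sub>R X = (\<Sum>n. a (n + 2))"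
    by simp
  have "norm (a (n + 2)) \<le> t\<^sup>2 * g n" for n
    unfolding a_def g_def by (rule norm_mat_exp_term_le_square[OF t])
  then have "norm (\<Sum>n. a (n + 2)) \<le> (\<Sum>n. t\<^sup>2 * g n)"
    by (rule norm_suminf_le) (intro summable_mult \<open>summable g\<close>)
  also have "\<dots> = t\<^sup>2 * suminf g"
    by (rule suminf_mult[OF \<open>summable g\<close>])
  finally show "norm (mat_exp (t *\<^sub>R X) - mat 1 - t *\<^sub>R X) \<le> t\<^sup>2 * suminf g"
    unfolding remainder .
qed

lemma tendsto_mat_exp_difference_quotient:
  fixes X :: "'n::finite mat"
  shows "((\<lambda>t. (1 / t) *\<^sub>R (mat_exp (t *\<^sub>R X) - mat 1)) \<longlongrightarrow> X) (at 0)"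
proof -
  obtain K where K: "\<And>t. \<bar>t\<bar> \<le> 1 \<Longrightarrow> norm (mat_exp (t *\<^sub>R X) - mat 1 - t *\<^sub>R X) \<le> t\<^sup>2 * K"
    using norm_mat_exp_remainder_le[of X] by metis
  have "norm ((1 / t) *\<^sub>R (mat_exp (t *\<^sub>R X) - mat 1) - X) \<le> \<bar>t\<bar> * K"
    if "\<bar>t\<bar> \<le> 1" "t \<noteq> 0" for t
  proof -
    have "(1 / t) *\<^sub>R (mat_exp (t *\<^sub>R X) - mat 1) - X = (1 / t) *\<^sub>R (mat_exp (t *\<^sub>R X) - mat 1 - t *\<^sub>R X)"
      using that by (simp add: algebra_simps)
    then have "norm ((1 / t) *\<^sub>R (mat_exp (t *\<^sub>R X) - mat 1) - X)
        = norm (mat_exp (t *\<^sub>R X) - mat 1 - t *\<^sub>R X) / \<bar>t\<bar>"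
      by simp
    also have "\<dots> \<le> t\<^sup>2 * K / \<bar>t\<bar>"
      by (intro divide_right_mono K that(1)) simp
    also have "t\<^sup>2 * K = (\<bar>t\<bar> * K) * \<bar>t\<bar>"
      by (simp add: power2_eq_square mult_ac)
    also have "\<dots> / \<bar>t\<bar> = \<bar>t\<bar> * K"
      using that(2) by simp
    finally show ?thesis .
  qed
  then have "\<forall>\<^sub>F t in at 0. norm ((1 / t) *\<^sub>R (mat_exp (t *\<^sub>R X) - mat 1) - X) \<le> \<bar>t\<bar> * K"
    unfolding eventually_at by (intro exI[of _ 1]) (auto simp: dist_real_def)
  then have "((\<lambda>t. (1 / t) *\<^sub>R (mat_exp (t *\<^sub>R X) - mat 1) - X) \<longlongrightarrow> 0) (at 0)"
    by (rule Lim_null_comparison) (auto intro!: tendsto_eq_intros)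
  then show ?thesis
    by (simp add: Lim_null[symmetric])
qed

lemma matrix_diff_ldistrib: "(A :: real^'n^'m) ** (B - C) = A ** B - A ** C"
  by (simp add: matrix_matrix_mult_def vec_eq_iff sum_subtractf right_diff_distrib)

lemma matrix_diff_rdistrib: "((B :: real^'n^'m) - C) ** A = B ** A - C ** A"
  by (simp add: matrix_matrix_mult_def vec_eq_iff sum_subtractf left_diff_distrib)

lemma matrix_add_rdistrib: "((B :: real^'n^'m) + C) ** A = B ** A + C ** A"
  by (simp add: matrix_matrix_mult_def vec_eq_iff sum.distrib distrib_right)

lemma bounded_linear_matrix_mult_left: "bounded_linear (\<lambda>M :: real^'p^'n. (P :: real^'n^'m) ** M)"
  by (intro linear_conv_bounded_linear[THEN iffD1] linearI)
    (simp_all add: matrix_add_ldistrib matrix_scalar_ac flip: scalar_matrix_assoc)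

lemma bounded_linear_matrix_mult_right: "bounded_linear (\<lambda>M :: real^'n^'m. M ** (P :: real^'p^'n))"
  by (intro linear_conv_bounded_linear[THEN iffD1] linearI)
    (simp_all add: matrix_add_rdistrib flip: scalar_matrix_assoc)

lemma commute_if_commute_mat_exp:
  fixes P Y :: "'n::finite mat"
  assumes "\<And>t. P ** mat_exp (t *\<^sub>R Y) = mat_exp (t *\<^sub>R Y) ** P"
  shows "P ** Y = Y ** P"
proof -
  define q where "q t = (1 / t) *\<^sub>R (mat_exp (t *\<^sub>R Y) - mat 1)" for t
  have q: "(q \<longlongrightarrow> Y) (at 0)"
    unfolding q_def by (rule tendsto_mat_exp_difference_quotient)
  have "P ** (mat_exp (t *\<^sub>R Y) - mat 1) = (mat_exp (t *\<^sub>R Y) - mat 1) ** P" for t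
    by (simp add: matrix_diff_ldistrib matrix_diff_rdistrib assms)
  then have "P ** q t = q t ** P" for t
    by (simp add: q_def matrix_scalar_ac flip: scalar_matrix_assoc)
  have "((\<lambda>t. P ** q t) \<longlongrightarrow> P ** Y) (at 0)"
    by (rule bounded_linear.tendsto[OF bounded_linear_matrix_mult_left q])
  moreover have "((\<lambda>t. P ** q t) \<longlongrightarrow> Y ** P) (at 0)"
    unfolding \<open>\<And>t. P ** q t = q t ** P\<close>
    by (rule bounded_linear.tendsto[OF bounded_linear_matrix_mult_right q])
  ultimately show ?thesis
    by (rule tendsto_unique[rotated]) simp
qed

lemma lie_alg_commute:
  fixes G :: "'n::finite mat set"
  assumes "\<forall>A\<in>G. \<forall>A'\<in>G. A ** A' = A' ** A" and "X \<in> lie_alg G" and "Y \<in> lie_alg G"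
  shows "X ** Y = Y ** X"
proof -
  have "mat_exp (s *\<^sub>R X) ** Y = Y ** mat_exp (s *\<^sub>R X)" for s
  proof (rule commute_if_commute_mat_exp)
    show "mat_exp (s *\<^sub>R X) ** mat_exp (t *\<^sub>R Y) = mat_exp (t *\<^sub>R Y) ** mat_exp (s *\<^sub>R X)" for t
      using assms unfolding lie_alg_def by blast
  qed
  then show ?thesis
    by (metis commute_if_commute_mat_exp)
qed

section \<open>Simultaneous diagonalisation of commuting symmetric matrices\<close>

lemma inner_symmetric_matrix:
  fixes X :: "real^'n^'n"
  assumes "transpose X = X"
  shows "(X *v u) \<bullet> v = u \<bullet> (X *v v)"
  by (metis assms dot_lmul_matrix transpose_matrix_vector)

lemma eq_0_if_quadratic_nonpos:
  fixes a b :: real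
  assumes "a \<ge> 0" and "\<And>t. 2 * t * a + t\<^sup>2 * b \<le> 0"
  shows "a = 0"
proof -
  define t where "t = a / (\<bar>b\<bar> + 1)"
  have "t \<ge> 0" "t * \<bar>b\<bar> \<le> a"
    using assms(1) by (auto simp: t_def field_simps)
  then have "t * a \<le> 2 * t * a + t\<^sup>2 * b"
    using mult_left_mono[of "t * \<bar>b\<bar>" a t] abs_ge_minus_self[of b] mult_left_mono[of "- \<bar>b\<bar>" b "t * t"]
    by (auto simp: power2_eq_square algebra_simps)
  with assms(2)[of t] have "t * a \<le> 0"
    by linarith
  with assms(1) show ?thesis
    by (auto simp: t_def mult_le_0_iff field_simps)
qed

lemma rayleigh_quotient_maximiser:
  fixes X :: "real^'n^'n"
  assumes W: "subspace W" "w0 \<in> W" "w0 \<noteq> 0"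
  obtains v where "v \<in> W" "norm v = 1"
    and "\<And>y. y \<in> W \<Longrightarrow> (X *v y) \<bullet> y \<le> ((X *v v) \<bullet> v) * (norm y)\<^sup>2"
proof -
  define q where "q w = (X *v w) \<bullet> w" for w
  have "compact (W \<inter> sphere 0 1)"
    by (intro closed_Int_compact closed_subspace W compact_sphere)
  moreover have "w0 /\<^sub>R norm w0 \<in> W \<inter> sphere 0 1"
    using W by (simp add: subspace_scale)
  then have "W \<inter> sphere 0 1 \<noteq> {}"
    by blast
  moreover have "continuous_on (W \<inter> sphere 0 1) q"
    unfolding q_def by (intro continuous_intros linear_continuous_on matrix_vector_mul_bounded_linear)
  ultimately obtain v where v: "v \<in> W \<inter> sphere 0 1"
    and v_max: "\<And>y. y \<in> W \<inter> sphere 0 1 \<Longrightarrow> q y \<le> q v"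
    using continuous_attains_sup[of "W \<inter> sphere 0 1" q] by blast
  have "q y \<le> q v * (norm y)\<^sup>2" if "y \<in> W" for y
  proof (cases "y = 0")
    case False
    have "q (y /\<^sub>R norm y) \<le> q v"
      using that False W(1) by (intro v_max) (simp add: subspace_scale)
    moreover have "q (y /\<^sub>R norm y) = q y / (norm y)\<^sup>2"
      by (simp add: q_def matrix_vector_mult_scaleR power2_eq_square field_simps)
    ultimately show ?thesis
      using False by (simp add: divide_le_eq mult.commute)
  qed (simp add: q_def)
  with v that show thesis
    unfolding q_def by auto
qed

lemma symmetric_matrix_eigenvector_in_invariant_subspace:
  fixes X :: "real^'n^'n"
  assumes sym: "transpose X = X" and W: "subspace W" "w0 \<in> W" "w0 \<noteq> 0"
    and inv: "\<And>w. w \<in> W \<Longrightarrow> X *v w \<in> W"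
  obtains v l where "v \<in> W" "v \<noteq> 0" "X *v v = l *\<^sub>R v"
proof -
  define q where "q w = (X *v w) \<bullet> w" for w
  obtain v where v: "v \<in> W" "norm v = 1" and rayleigh: "\<And>y. y \<in> W \<Longrightarrow> q y \<le> q v * (norm y)\<^sup>2"
    using rayleigh_quotient_maximiser[OF W, of X] unfolding q_def by blast
  \<comment> \<open>Perturbing the maximiser v along w shows that w is orthogonal to itself.\<close>
  define w where "w = X *v v - q v *\<^sub>R v"
  have w: "w \<in> W"
    unfolding w_def by (intro subspace_diff W inv v subspace_scale)
  have vv: "v \<bullet> v = 1"
    using v(2) by (simp add: norm_eq_1)
  have vw: "v \<bullet> w = 0"
    using vv by (simp add: w_def q_def inner_diff_right inner_commute)
  have "2 * t * (w \<bullet> w) + t\<^sup>2 * (q w - q v * (w \<bullet> w)) \<le> 0" for t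
  proof -
    have "q (v + t *\<^sub>R w) = q v + 2 * t * (w \<bullet> w) + t\<^sup>2 * q w"
      using inner_symmetric_matrix[OF sym, of w v] vw
      by (simp add: q_def w_def matrix_vector_right_distrib matrix_vector_mult_scaleR
          inner_add_left inner_add_right inner_diff_left inner_diff_right inner_commute
          power2_eq_square algebra_simps)
    moreover have "(norm (v + t *\<^sub>R w))\<^sup>2 = 1 + t\<^sup>2 * (w \<bullet> w)"
      unfolding power2_norm_eq_inner
      by (simp add: inner_add_left inner_add_right vv vw inner_commute[of w v] power2_eq_square)
    moreover have "q (v + t *\<^sub>R w) \<le> q v * (norm (v + t *\<^sub>R w))\<^sup>2"
      by (intro rayleigh subspace_add W v subspace_scale w)
    ultimately show ?thesis
      by (simp add: algebra_simps)
  qed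
  then have "w \<bullet> w = 0"
    by (intro eq_0_if_quadratic_nonpos) simp_all
  then have "X *v v = q v *\<^sub>R v"
    by (simp add: w_def)
  with v that show thesis
    by fastforce
qed

lemma commuting_symmetric_matrices_common_eigenvector:
  fixes F :: "'n::finite mat set"
  assumes "finite F" and "\<forall>X\<in>F. transpose X = X" and "\<forall>X\<in>F. \<forall>Y\<in>F. X ** Y = Y ** X"
    and "subspace W" and "w0 \<in> W" and "w0 \<noteq> 0" and "\<forall>X\<in>F. \<forall>w\<in>W. X *v w \<in> W"
  shows "\<exists>v\<in>W. v \<noteq> 0 \<and> (\<forall>X\<in>F. \<exists>l. X *v v = l *\<^sub>R v)"
  using assms
proof (induction F arbitrary: W w0 rule: finite_induct)
  case (insert X F)
  have sym: "transpose X = X" "\<forall>Y\<in>F. transpose Y = Y"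
    and comm: "\<forall>Y\<in>F. X ** Y = Y ** X" "\<forall>Y\<in>F. \<forall>Z\<in>F. Y ** Z = Z ** Y"
    and inv: "\<And>w. w \<in> W \<Longrightarrow> X *v w \<in> W" "\<forall>Y\<in>F. \<forall>w\<in>W. Y *v w \<in> W"
    using insert.prems(1,2,6) by blast+
  obtain u l where u: "u \<in> W" "u \<noteq> 0" "X *v u = l *\<^sub>R u"
    using symmetric_matrix_eigenvector_in_invariant_subspace[OF sym(1) insert.prems(3-5) inv(1)]
    by metis
  \<comment> \<open>The eigenspace of X in W is invariant under the matrices commuting with X.\<close>
  define E where "E = {w \<in> W. X *v w = l *\<^sub>R w}"
  have "subspace E"
    unfolding subspace_def
  proof (intro conjI ballI allI)
    show "0 \<in> E"
      using subspace_0[OF insert.prems(3)] by (simp add: E_def)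
    show "x + y \<in> E" if "x \<in> E" "y \<in> E" for x y
      using that subspace_add[OF insert.prems(3)]
      by (simp add: E_def matrix_vector_right_distrib scaleR_add_right)
    show "c *\<^sub>R x \<in> E" if "x \<in> E" for c x
      using that subspace_scale[OF insert.prems(3)] by (simp add: E_def matrix_vector_mult_scaleR)
  qed
  moreover have "\<forall>Y\<in>F. \<forall>w\<in>E. Y *v w \<in> E"
  proof (intro ballI)
    fix Y w
    assume "Y \<in> F" "w \<in> E"
    have "X *v (Y *v w) = (X ** Y) *v w"
      by (simp add: matrix_vector_mul_assoc)
    also have "\<dots> = Y *v (X *v w)"
      using comm(1) \<open>Y \<in> F\<close> by (simp add: matrix_vector_mul_assoc)
    also have "\<dots> = l *\<^sub>R (Y *v w)"
      using \<open>w \<in> E\<close> by (simp add: E_def matrix_vector_mult_scaleR)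
    finally show "Y *v w \<in> E"
      using inv(2) \<open>Y \<in> F\<close> \<open>w \<in> E\<close> by (simp add: E_def)
  qed
  moreover have "u \<in> E"
    using u by (simp add: E_def)
  ultimately obtain v where "v \<in> E" "v \<noteq> 0" "\<forall>Y\<in>F. \<exists>m. Y *v v = m *\<^sub>R v"
    using insert.IH[OF sym(2) comm(2) _ _ u(2)] by blast
  then show ?case
    by (auto simp: E_def)
qed blast

lemma commuting_symmetric_matrices_orthogonal_eigenvector:
  fixes F :: "'n::finite mat set" and S :: "(real^'n) set"
  assumes "finite F" and sym: "\<forall>X\<in>F. transpose X = X" and "\<forall>X\<in>F. \<forall>Y\<in>F. X ** Y = Y ** X"
    and "dim S < CARD('n)" and eig: "\<And>s X. s \<in> S \<Longrightarrow> X \<in> F \<Longrightarrow> \<exists>l. X *v s = l *\<^sub>R s"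
  obtains u where "norm u = 1" "\<And>s. s \<in> S \<Longrightarrow> s \<bullet> u = 0" "\<And>X. X \<in> F \<Longrightarrow> \<exists>l. X *v u = l *\<^sub>R u"
proof -
  define W where "W = {w. \<forall>s\<in>S. s \<bullet> w = 0}"
  have "dim S < DIM(real^'n)"
    using assms(4) by simp
  then obtain w0 where "w0 \<noteq> 0" "\<And>y. y \<in> span S \<Longrightarrow> orthogonal w0 y"
    using orthogonal_to_subspace_exists by metis
  then have "w0 \<in> W"
    by (auto simp: W_def orthogonal_def inner_commute intro: span_base)
  moreover have "subspace W"
    by (auto simp: subspace_def W_def inner_add_right)
  moreover have "\<forall>X\<in>F. \<forall>w\<in>W. X *v w \<in> W"
  proof (intro ballI)
    fix X w
    assume "X \<in> F" "w \<in> W"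
    have "s \<bullet> (X *v w) = 0" if s: "s \<in> S" for s
    proof -
      obtain l where "X *v s = l *\<^sub>R s"
        using eig[OF s \<open>X \<in> F\<close>] by blast
      then have "s \<bullet> (X *v w) = l * (s \<bullet> w)"
        using inner_symmetric_matrix[of X s w] sym \<open>X \<in> F\<close> by simp
      with \<open>w \<in> W\<close> s show ?thesis
        by (simp add: W_def)
    qed
    then show "X *v w \<in> W"
      by (simp add: W_def)
  qed
  ultimately obtain v where v: "v \<in> W" "v \<noteq> 0" "\<forall>X\<in>F. \<exists>l. X *v v = l *\<^sub>R v"
    using commuting_symmetric_matrices_common_eigenvector[of F W w0] assms(1-3) \<open>w0 \<noteq> 0\<close> by blast
  show thesis
  proof (rule that[of "v /\<^sub>R norm v"])
    show "norm (v /\<^sub>R norm v) = 1"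
      using v(2) by simp
    show "s \<bullet> (v /\<^sub>R norm v) = 0" if "s \<in> S" for s
      using v(1) that by (simp add: W_def)
    show "\<exists>l. X *v (v /\<^sub>R norm v) = l *\<^sub>R (v /\<^sub>R norm v)" if X: "X \<in> F" for X
    proof -
      obtain l where "X *v v = l *\<^sub>R v"
        using v(3) X by blast
      then have "X *v (v /\<^sub>R norm v) = l *\<^sub>R (v /\<^sub>R norm v)"
        by (simp add: matrix_vector_mult_scaleR)
      then show ?thesis ..
    qed
  qed
qed

definition orthonormal_eigenvectors :: "'n::finite mat set \<Rightarrow> (real^'n) set \<Rightarrow> bool" where
  "orthonormal_eigenvectors F S \<longleftrightarrow> pairwise orthogonal S \<and> (\<forall>s\<in>S. norm s = 1)
     \<and> (\<forall>s\<in>S. \<forall>X\<in>F. \<exists>l. X *v s = l *\<^sub>R s)"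

lemma orthonormal_eigenvectors_independent:
  fixes F :: "'n::finite mat set"
  assumes "orthonormal_eigenvectors F S"
  shows "independent S" "finite S" "card S \<le> CARD('n)"
proof -
  show "independent S"
    using assms unfolding orthonormal_eigenvectors_def
    by (intro pairwise_orthogonal_independent) auto
  then show "finite S" "card S \<le> CARD('n)"
    using independent_bound[of S] by simp_all
qed

lemma commuting_symmetric_matrices_orthonormal_eigenvectors:
  fixes F :: "'n::finite mat set"
  assumes "finite F" and "\<forall>X\<in>F. transpose X = X" and "\<forall>X\<in>F. \<forall>Y\<in>F. X ** Y = Y ** X"
  obtains S where "orthonormal_eigenvectors F S" "card S = CARD('n)"
proof -
  have "orthonormal_eigenvectors F {}"
    by (simp add: orthonormal_eigenvectors_def)
  moreover have "\<forall>S. orthonormal_eigenvectors F S \<longrightarrow> card S < Suc CARD('n)"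
    using orthonormal_eigenvectors_independent(3)[of F] by (simp add: less_Suc_eq_le)
  ultimately obtain S where S: "orthonormal_eigenvectors F S"
    and S_max: "\<forall>S'. orthonormal_eigenvectors F S' \<longrightarrow> card S' \<le> card S"
    using ex_has_greatest_nat[of "orthonormal_eigenvectors F" "{}" card "Suc CARD('n)"] by blast
  have "card S = CARD('n)"
  proof (rule ccontr)
    assume "card S \<noteq> CARD('n)"
    with orthonormal_eigenvectors_independent[OF S] have "dim S < CARD('n)"
      by (simp add: dim_eq_card_independent)
    moreover have "\<And>s X. s \<in> S \<Longrightarrow> X \<in> F \<Longrightarrow> \<exists>l. X *v s = l *\<^sub>R s"
      using S by (simp add: orthonormal_eigenvectors_def)
    ultimately obtain u where u: "norm u = 1" "\<And>s. s \<in> S \<Longrightarrow> s \<bullet> u = 0"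
      "\<And>X. X \<in> F \<Longrightarrow> \<exists>l. X *v u = l *\<^sub>R u"
      using commuting_symmetric_matrices_orthogonal_eigenvector[OF assms] by metis
    have "u \<notin> S"
      using u(1,2) by (auto simp: norm_eq_1)
    have "orthonormal_eigenvectors F (insert u S)"
      using S u unfolding orthonormal_eigenvectors_def pairwise_insert
      by (auto simp: orthogonal_def inner_commute)
    then have "card (insert u S) \<le> card S"
      using S_max by blast
    then show False
      using \<open>u \<notin> S\<close> orthonormal_eigenvectors_independent(2)[OF S] by simp
  qed
  with S that show thesis
    by blast
qed

lemma commuting_symmetric_matrices_common_eigenbasis:
  fixes F :: "'n::finite mat set"
  assumes "finite F" and "\<forall>X\<in>F. transpose X = X" and "\<forall>X\<in>F. \<forall>Y\<in>F. X ** Y = Y ** X"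
  obtains e :: "'n \<Rightarrow> real^'n"
  where "\<And>i j. e i \<bullet> e j = (if i = j then 1 else 0)"
    and "\<And>i X. X \<in> F \<Longrightarrow> \<exists>l. X *v e i = l *\<^sub>R e i"
proof -
  obtain S where S: "orthonormal_eigenvectors F S" "card S = CARD('n)"
    using commuting_symmetric_matrices_orthonormal_eigenvectors[OF assms] by blast
  then obtain e where e: "bij_betw e (UNIV :: 'n set) S"
    using finite_same_card_bij[of "UNIV :: 'n set" S] orthonormal_eigenvectors_independent(2)
    by auto
  show thesis
  proof (rule that)
    show "e i \<bullet> e j = (if i = j then 1 else 0)" for i j
    proof (cases "i = j")
      case True
      then show ?thesis
        using S(1) bij_betw_apply[OF e] by (simp add: orthonormal_eigenvectors_def norm_eq_1)
    next
      case False
      then have "e i \<noteq> e j"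
        using bij_betw_imp_inj_on[OF e] by (auto simp: inj_def)
      then show ?thesis
        using S(1) bij_betw_apply[OF e] False
        by (simp add: orthonormal_eigenvectors_def pairwise_def orthogonal_def)
    qed
    show "\<exists>l. X *v e i = l *\<^sub>R e i" if "X \<in> F" for i X
      using S(1) bij_betw_apply[OF e] that by (auto simp: orthonormal_eigenvectors_def)
  qed
qed

lemma orthonormal_family_expansion:
  fixes e :: "'n::finite \<Rightarrow> real^'n"
  assumes e: "\<And>i j. e i \<bullet> e j = (if i = j then 1 else 0)"
  shows "x = (\<Sum>i\<in>UNIV. (x \<bullet> e i) *\<^sub>R e i)"
proof -
  have "e i \<noteq> 0" for i
    using e[of i i] by auto
  have "inj e"
    using e by (metis injI one_neq_zero)
  have "independent (range e)"
    using e \<open>\<And>i. e i \<noteq> 0\<close>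
    by (intro pairwise_orthogonal_independent) (auto simp: pairwise_def orthogonal_def)
  moreover have "dim (UNIV :: (real^'n) set) \<le> card (range e)"
    using \<open>inj e\<close> by (simp add: card_image)
  ultimately have span: "UNIV \<subseteq> span (range e)"
    by (intro card_ge_dim_independent) auto
  define r where "r = x - (\<Sum>i\<in>UNIV. (x \<bullet> e i) *\<^sub>R e i)"
  have "r \<bullet> e j = 0" for j
  proof -
    have "(\<Sum>i\<in>UNIV. ((x \<bullet> e i) *\<^sub>R e i) \<bullet> e j) = (\<Sum>i\<in>UNIV. if i = j then x \<bullet> e j else 0)"
      by (intro sum.cong refl) (simp add: e)
    then show ?thesis
      by (simp add: r_def inner_diff_left inner_sum_left)
  qed
  moreover have "r \<in> span (range e)"
    using span by blast
  ultimately have "orthogonal r r"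
    by (intro orthogonal_to_span[of r "range e" r]) (auto simp: orthogonal_def)
  then show ?thesis
    by (simp add: r_def orthogonal_def)
qed

section \<open>A cubic bound on the positive orthant\<close>

definition coordinate_subspace :: "'n::finite set \<Rightarrow> (real^'n) set" where
  "coordinate_subspace K = {w. \<forall>i. i \<notin> K \<longrightarrow> w $ i = 0}"

lemma subspace_coordinate_subspace: "subspace (coordinate_subspace K)"
  by (auto simp: subspace_def coordinate_subspace_def)

lemma linear_lower_bound_on_coordinate_subspaces:
  fixes f :: "real^'n \<Rightarrow> 'm::euclidean_space"
  assumes "linear f"
  obtains c where "c > 0"
    and "\<And>K w. \<forall>v\<in>coordinate_subspace K. f v = 0 \<longrightarrow> v = 0 \<Longrightarrow> w \<in> coordinate_subspace K
           \<Longrightarrow> c * norm w \<le> norm (f w)"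
proof -
  have "\<exists>c>0. (\<forall>v\<in>coordinate_subspace K. f v = 0 \<longrightarrow> v = 0)
           \<longrightarrow> (\<forall>w\<in>coordinate_subspace K. c * norm w \<le> norm (f w))" for K
    using injective_imp_isometric[OF closed_subspace subspace_coordinate_subspace
        linear_conv_bounded_linear[THEN iffD1, OF assms]] subspace_coordinate_subspace
    by (metis zero_less_one)
  then obtain c where c_pos: "\<And>K. c K > 0"
    and c: "\<And>K. \<forall>v\<in>coordinate_subspace K. f v = 0 \<longrightarrow> v = 0
              \<Longrightarrow> \<forall>w\<in>coordinate_subspace K. c K * norm w \<le> norm (f w)"
    by metis
  \<comment> \<open>There are only finitely many coordinate subspaces.\<close>
  show thesis
  proof (rule that)
    show "Min (range c) > 0"
      using c_pos by simp
    show "Min (range c) * norm w \<le> norm (f w)"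
      if "\<forall>v\<in>coordinate_subspace K. f v = 0 \<longrightarrow> v = 0" "w \<in> coordinate_subspace K" for K w
      using c[OF that(1)] that(2) mult_right_mono[OF Min_le[of "range c" "c K"]]
      by (meson finite UNIV_I finite_imageI image_eqI norm_ge_zero order_trans)
  qed
qed

lemma kernel_vector_orientation:
  fixes m w :: "real^'n"
  assumes "w \<noteq> 0" and m: "\<forall>i. m $ i \<ge> 0"
  obtains w' where "w' = w \<or> w' = - w" "m \<bullet> w' \<ge> 0" "\<exists>j. w' $ j > 0"
proof -
  have pos: "\<exists>j. v $ j > 0" if "m \<bullet> v > 0" for v
  proof (rule ccontr)
    assume "\<not> (\<exists>j. v $ j > 0)"
    then have "m \<bullet> v \<le> 0"
      using m unfolding inner_vec_def by (intro sum_nonpos) (simp add: mult_nonneg_nonpos not_less)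
    with that show False
      by simp
  qed
  obtain j where "w $ j \<noteq> 0"
    using assms(1) by (auto simp: vec_eq_iff)
  then consider "m \<bullet> w > 0" | "m \<bullet> w < 0" | "m \<bullet> w = 0" "w $ j > 0" | "m \<bullet> w = 0" "w $ j < 0"
    by linarith
  then show thesis
    using pos[of w] pos[of "- w"] that[of w] that[of "- w"] by cases (auto simp: inner_minus_right)
qed

lemma shrink_support_along_kernel:
  fixes f :: "real^'n \<Rightarrow> 'm::real_vector"
  assumes lin: "linear f" and z: "\<forall>i. z $ i \<ge> 0"
    and w: "f w = 0" "w \<in> coordinate_subspace {i. z $ i \<noteq> 0}" "m \<bullet> w \<ge> 0" "w $ j > 0"
  obtains z' where "\<forall>i. z' $ i \<ge> 0" "f z' = f z" "m \<bullet> z' \<le> m \<bullet> z"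
    "{i. z' $ i \<noteq> 0} \<subset> {i. z $ i \<noteq> 0}"
proof -
  \<comment> \<open>Move from z against w as far as the positive orthant allows.\<close>
  define T where "T = {i. w $ i > 0}"
  define t where "t = Min ((\<lambda>i. z $ i / w $ i) ` T)"
  have T: "finite T" "j \<in> T"
    using w(4) by (auto simp: T_def)
  then obtain i0 where i0: "i0 \<in> T" "t = z $ i0 / w $ i0"
    using Min_in[of "(\<lambda>i. z $ i / w $ i) ` T"] unfolding t_def by blast
  have t_le: "t \<le> z $ i / w $ i" if "i \<in> T" for i
    unfolding t_def using T that by (intro Min_le) auto
  have "t \<ge> 0"
    using i0 z by (simp add: T_def)
  define z' where "z' = z - t *\<^sub>R w"
  show thesis
  proof (rule that[of z'])
    show "\<forall>i. z' $ i \<ge> 0"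
    proof
      fix i
      show "z' $ i \<ge> 0"
      proof (cases "w $ i > 0")
        case True
        then show ?thesis
          using t_le[of i] by (simp add: T_def z'_def le_divide_eq)
      next
        case False
        then show ?thesis
          using \<open>t \<ge> 0\<close> z[rule_format, of i] mult_nonneg_nonpos[of t "w $ i"] by (simp add: z'_def)
      qed
    qed
    show "f z' = f z"
      using w(1) by (simp add: z'_def linear_diff[OF lin] linear_scale[OF lin])
    show "m \<bullet> z' \<le> m \<bullet> z"
      using \<open>t \<ge> 0\<close> w(3) by (simp add: z'_def inner_diff_right)
    have "z' $ i0 = 0" "z $ i0 \<noteq> 0"
      using i0 w(2) by (auto simp: z'_def T_def coordinate_subspace_def)
    moreover have "{i. z' $ i \<noteq> 0} \<subseteq> {i. z $ i \<noteq> 0}"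
      using w(2) by (auto simp: z'_def coordinate_subspace_def)
    ultimately show "{i. z' $ i \<noteq> 0} \<subset> {i. z $ i \<noteq> 0}"
      by blast
  qed
qed

lemma nonneg_preimage_with_injective_support:
  fixes f :: "real^'n \<Rightarrow> 'm::real_vector"
  assumes lin: "linear f" and m: "\<forall>i. m $ i \<ge> 0" and z: "\<forall>i. z $ i \<ge> 0"
  obtains z' where "\<forall>i. z' $ i \<ge> 0" "f z' = f z" "m \<bullet> z' \<le> m \<bullet> z"
    "\<forall>w\<in>coordinate_subspace {i. z' $ i \<noteq> 0}. f w = 0 \<longrightarrow> w = 0"
  using z
proof (induction "card {i. z $ i \<noteq> 0}" arbitrary: z thesis rule: less_induct)
  case less
  show ?case
  proof (cases "\<forall>w\<in>coordinate_subspace {i. z $ i \<noteq> 0}. f w = 0 \<longrightarrow> w = 0")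
    case True
    with less.prems show ?thesis
      by blast
  next
    case False
    then obtain w where w: "w \<in> coordinate_subspace {i. z $ i \<noteq> 0}" "f w = 0" "w \<noteq> 0"
      by blast
    obtain w' where w': "w' = w \<or> w' = - w" "m \<bullet> w' \<ge> 0" "\<exists>j. w' $ j > 0"
      using kernel_vector_orientation[OF w(3) m] by blast
    have "w' \<in> coordinate_subspace {i. z $ i \<noteq> 0}" "f w' = 0"
      using w w'(1) linear_neg[OF lin] subspace_neg[OF subspace_coordinate_subspace] by auto
    then obtain z' where z': "\<forall>i. z' $ i \<ge> 0" "f z' = f z" "m \<bullet> z' \<le> m \<bullet> z"
      "{i. z' $ i \<noteq> 0} \<subset> {i. z $ i \<noteq> 0}"
      using shrink_support_along_kernel[OF lin less.prems(2)] w'(2,3) by metis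
    then have "card {i. z' $ i \<noteq> 0} < card {i. z $ i \<noteq> 0}"
      by (intro psubset_card_mono) auto
    then obtain z'' where "\<forall>i. z'' $ i \<ge> 0" "f z'' = f z'" "m \<bullet> z'' \<le> m \<bullet> z'"
      "\<forall>w\<in>coordinate_subspace {i. z'' $ i \<noteq> 0}. f w = 0 \<longrightarrow> w = 0"
      using less.hyps z'(1) by metis
    with z' less.prems(1) show ?thesis
      by fastforce
  qed
qed

lemma linear_vec_expansion:
  fixes f :: "real^'n \<Rightarrow> 'm::real_vector"
  assumes "linear f"
  shows "f z = (\<Sum>i\<in>UNIV. z $ i *\<^sub>R f (axis i 1))"
proof -
  have "f z = f (\<Sum>i\<in>UNIV. z $ i *\<^sub>R axis i 1)"
    using basis_expansion[of z] by (simp add: scalar_mult_eq_scaleR)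
  then show ?thesis
    by (simp add: linear_sum[OF assms] linear_scale[OF assms])
qed

lemma weighted_Cauchy_Schwarz:
  fixes z \<mu> :: "'i \<Rightarrow> real"
  assumes "\<And>i. i \<in> I \<Longrightarrow> z i \<ge> 0"
  shows "(\<Sum>i\<in>I. z i * \<mu> i)\<^sup>2 \<le> (\<Sum>i\<in>I. z i * (\<mu> i)\<^sup>2) * (\<Sum>i\<in>I. z i)"
proof -
  have sq: "(sqrt (z i))\<^sup>2 = z i" if "i \<in> I" for i
    using assms[OF that] by simp
  have "(\<Sum>i\<in>I. (sqrt (z i) * \<mu> i) * sqrt (z i)) = (\<Sum>i\<in>I. z i * \<mu> i)"
    by (intro sum.cong refl) (metis sq power2_eq_square mult.commute mult.left_commute)
  moreover have "(\<Sum>i\<in>I. (sqrt (z i) * \<mu> i)\<^sup>2) = (\<Sum>i\<in>I. z i * (\<mu> i)\<^sup>2)"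
    by (intro sum.cong refl) (simp add: power_mult_distrib sq)
  moreover have "(\<Sum>i\<in>I. (sqrt (z i))\<^sup>2) = (\<Sum>i\<in>I. z i)"
    by (intro sum.cong refl) (simp add: sq)
  ultimately show ?thesis
    using Cauchy_Schwarz_ineq_sum[of "\<lambda>i. sqrt (z i) * \<mu> i" "\<lambda>i. sqrt (z i)" I] by simp
qed

lemma norm_cube_le_if_norm_le:
  fixes f :: "real^'n \<Rightarrow> 'm::euclidean_space"
  assumes lin: "linear f" and c: "c > 0" and z: "\<forall>i. z $ i \<ge> 0" and "c * norm z \<le> norm (f z)"
  shows "norm (f z) ^ 3 \<le> real CARD('n) / c * (\<Sum>i\<in>UNIV. (f z \<bullet> f (axis i 1))\<^sup>2 * z $ i)"
proof -
  define a where "a = f z"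
  define \<mu> where "\<mu> i = a \<bullet> f (axis i 1)" for i
  define Q where "Q = (\<Sum>i\<in>UNIV. z $ i * (\<mu> i)\<^sup>2)"
  have "(\<Sum>i\<in>UNIV. z $ i) \<le> (\<Sum>i\<in>(UNIV :: 'n set). norm z)"
    by (intro sum_mono) (metis component_le_norm_cart abs_ge_self order_trans)
  also have "\<dots> \<le> real CARD('n) / c * norm a"
    using assms(4) c by (simp add: a_def field_simps)
  finally have sum_le: "(\<Sum>i\<in>UNIV. z $ i) \<le> real CARD('n) / c * norm a" .
  have "(norm a)\<^sup>2 = (\<Sum>i\<in>UNIV. z $ i * \<mu> i)"
    using linear_vec_expansion[OF lin, of z]
    by (simp add: a_def power2_norm_eq_inner inner_sum_right \<mu>_def)
  then have "(norm a ^ 2)\<^sup>2 \<le> Q * (\<Sum>i\<in>UNIV. z $ i)"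
    using weighted_Cauchy_Schwarz[of UNIV "\<lambda>i. z $ i" \<mu>] z by (simp add: Q_def)
  also have "\<dots> \<le> Q * (real CARD('n) / c * norm a)"
    using sum_le z by (intro mult_left_mono) (simp_all add: Q_def sum_nonneg)
  finally have le: "norm a ^ 3 * norm a \<le> (real CARD('n) / c * Q) * norm a"
    by (simp add: power_mult[symmetric] mult_ac numeral_eq_Suc)
  have "norm a ^ 3 \<le> real CARD('n) / c * Q"
  proof (cases "a = 0")
    case True
    then show ?thesis
      using c z by (simp add: Q_def sum_nonneg)
  next
    case False
    then show ?thesis
      using mult_right_le_imp_le[OF le] by simp
  qed
  then show ?thesis
    by (simp add: a_def Q_def \<mu>_def mult.commute)
qed

lemma linear_orthant_cubic_bound:
  fixes f :: "real^'n \<Rightarrow> 'm::euclidean_space"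
  assumes lin: "linear f"
  obtains C where "C > 0"
    and "\<And>z. \<forall>i. z $ i \<ge> 0 \<Longrightarrow> norm (f z) ^ 3 \<le> C * (\<Sum>i\<in>UNIV. (f z \<bullet> f (axis i 1))\<^sup>2 * z $ i)"
proof -
  obtain c where c: "c > 0"
    and c_bound: "\<And>K w. \<forall>v\<in>coordinate_subspace K. f v = 0 \<longrightarrow> v = 0 \<Longrightarrow> w \<in> coordinate_subspace K
                     \<Longrightarrow> c * norm w \<le> norm (f w)"
    using linear_lower_bound_on_coordinate_subspaces[OF lin] by blast
  show thesis
  proof (rule that)
    show "real CARD('n) / c > 0"
      using c by simp
    fix z :: "real^'n"
    assume z: "\<forall>i. z $ i \<ge> 0"
    define m :: "real^'n" where "m = (\<chi> i. (f z \<bullet> f (axis i 1))\<^sup>2)"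
    obtain z' where z': "\<forall>i. z' $ i \<ge> 0" "f z' = f z" "m \<bullet> z' \<le> m \<bullet> z"
      "\<forall>w\<in>coordinate_subspace {i. z' $ i \<noteq> 0}. f w = 0 \<longrightarrow> w = 0"
      using nonneg_preimage_with_injective_support[OF lin _ z, of m] by (auto simp: m_def)
    have "c * norm z' \<le> norm (f z')"
      using c_bound[OF z'(4), of z'] by (simp add: coordinate_subspace_def)
    then have "norm (f z') ^ 3 \<le> real CARD('n) / c * (m \<bullet> z')"
      using norm_cube_le_if_norm_le[OF lin c z'(1)] z'(2) by (simp add: m_def inner_vec_def mult.commute)
    also have "\<dots> \<le> real CARD('n) / c * (m \<bullet> z)"
      using c by (intro mult_left_mono z'(3)) simp
    finally show "norm (f z) ^ 3 \<le> real CARD('n) / c * (\<Sum>i\<in>UNIV. (f z \<bullet> f (axis i 1))\<^sup>2 * z $ i)"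
      using z'(2) by (simp add: m_def inner_vec_def mult.commute)
  qed
qed

section \<open>Coordinates in a common eigenbasis\<close>

lemma inner_sum_orthonormal:
  fixes v :: "'i \<Rightarrow> 'a::real_inner"
  assumes "finite I" and "\<And>i j. i \<in> I \<Longrightarrow> j \<in> I \<Longrightarrow> v i \<bullet> v j = (if i = j then 1 else 0)"
  shows "(\<Sum>i\<in>I. c i *\<^sub>R v i) \<bullet> (\<Sum>j\<in>I. d j *\<^sub>R v j) = (\<Sum>i\<in>I. c i * d i)"
proof -
  have "(\<Sum>i\<in>I. c i *\<^sub>R v i) \<bullet> (\<Sum>j\<in>I. d j *\<^sub>R v j) = (\<Sum>j\<in>I. \<Sum>i\<in>I. d j * (c i * (v i \<bullet> v j)))"
    by (simp only: inner_sum_left inner_sum_right inner_scaleR_left inner_scaleR_right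
        sum_distrib_left mult.assoc)
  also have "\<dots> = (\<Sum>j\<in>I. \<Sum>i\<in>I. if i = j then c j * d j else 0)"
    by (intro sum.cong refl) (simp add: assms(2))
  also have "\<dots> = (\<Sum>i\<in>I. c i * d i)"
    using assms(1) by simp
  finally show ?thesis .
qed

lemma orthonormal_basis_finite:
  assumes "orthonormal_basis B V"
  shows "finite B"
proof -
  have "0 \<notin> B"
    using assms by (force simp: orthonormal_basis_def)
  with assms have "independent B"
    by (intro pairwise_orthogonal_independent) (simp_all add: orthonormal_basis_def)
  then show ?thesis
    using independent_bound by blast
qed

lemma orthonormal_basis_inner:
  assumes "orthonormal_basis B V" and "X \<in> B" and "Y \<in> B"
  shows "X \<bullet> Y = (if X = Y then 1 else 0)"
  using assms by (auto simp: orthonormal_basis_def pairwise_def orthogonal_def norm_eq_1)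

lemma sym_part_commute:
  assumes "\<forall>A\<in>G. \<forall>A'\<in>G. A ** A' = A' ** A" and "X \<in> sym_part G" and "Y \<in> sym_part G"
  shows "X ** Y = Y ** X"
  by (rule lie_alg_commute[OF assms(1)]) (use assms(2,3) in \<open>simp_all add: sym_part_def\<close>)

locale common_eigenbasis =
  fixes B :: "'n::finite mat set" and e :: "'n \<Rightarrow> real^'n"
  assumes finite_B: "finite B"
    and orthonormal_B: "\<And>X Y. X \<in> B \<Longrightarrow> Y \<in> B \<Longrightarrow> X \<bullet> Y = (if X = Y then 1 else 0)"
    and orthonormal_e: "\<And>i j. e i \<bullet> e j = (if i = j then 1 else 0)"
    and eigenvector_e: "\<And>X i. X \<in> B \<Longrightarrow> \<exists>l. X *v e i = l *\<^sub>R e i"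
begin

definition eigenvalue :: "'n mat \<Rightarrow> 'n \<Rightarrow> real" where
  "eigenvalue X i = e i \<bullet> (X *v e i)"

lemma matrix_vector_mult_eigenvector: "X \<in> B \<Longrightarrow> X *v e i = eigenvalue X i *\<^sub>R e i"
  using eigenvector_e[of X i] orthonormal_e[of i i] by (auto simp: eigenvalue_def)

text \<open>weight_map is the linear map f of the proof sketch: at \<open>squared_coordinates x\<close> its
  coordinate along \<open>X \<in> B\<close> is \<open>(X *v x) \<bullet> x\<close> (see quadratic_form_eq).\<close>

definition squared_coordinates :: "real^'n \<Rightarrow> real^'n" where
  "squared_coordinates x = (\<chi> i. (x \<bullet> e i)\<^sup>2)"

definition weight_map :: "real^'n \<Rightarrow> 'n mat" where
  "weight_map z = (\<Sum>X\<in>B. (\<Sum>i\<in>UNIV. z $ i * eigenvalue X i) *\<^sub>R X)"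

lemma linear_weight_map: "linear weight_map"
  by (rule linearI)
    (simp_all add: weight_map_def distrib_right sum.distrib scaleR_add_left scaleR_sum_right
      sum_distrib_left mult.assoc)

lemma matrix_vector_mult_expansion:
  assumes "X \<in> B"
  shows "X *v x = (\<Sum>i\<in>UNIV. ((x \<bullet> e i) * eigenvalue X i) *\<^sub>R e i)"
proof -
  have "X *v x = X *v (\<Sum>i\<in>UNIV. (x \<bullet> e i) *\<^sub>R e i)"
    using orthonormal_family_expansion[OF orthonormal_e] by metis
  also have "\<dots> = (\<Sum>i\<in>UNIV. ((x \<bullet> e i) * eigenvalue X i) *\<^sub>R e i)"
    using assms
    by (simp add: linear_sum[OF matrix_vector_mul_linear] matrix_vector_mult_scaleR
        matrix_vector_mult_eigenvector)
  finally show ?thesis .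
qed

lemma quadratic_form_eq:
  assumes "X \<in> B"
  shows "(X *v x) \<bullet> x = (\<Sum>i\<in>UNIV. squared_coordinates x $ i * eigenvalue X i)"
proof -
  have "(X *v x) \<bullet> x = (\<Sum>i\<in>UNIV. ((x \<bullet> e i) * eigenvalue X i) *\<^sub>R e i) \<bullet> (\<Sum>i\<in>UNIV. (x \<bullet> e i) *\<^sub>R e i)"
    using matrix_vector_mult_expansion[OF assms] orthonormal_family_expansion[OF orthonormal_e] by metis
  also have "\<dots> = (\<Sum>i\<in>UNIV. squared_coordinates x $ i * eigenvalue X i)"
    by (simp add: inner_sum_orthonormal orthonormal_e squared_coordinates_def power2_eq_square mult_ac)
  finally show ?thesis .
qed

lemma inner_weight_map:
  "weight_map y \<bullet> weight_map z
     = (\<Sum>X\<in>B. (\<Sum>i\<in>UNIV. y $ i * eigenvalue X i) * (\<Sum>i\<in>UNIV. z $ i * eigenvalue X i))"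
  unfolding weight_map_def
  using inner_sum_orthonormal[of B id, OF finite_B] orthonormal_B by simp

lemma phi_eq_norm_weight_map: "phi B x = (norm (weight_map (squared_coordinates x)))\<^sup>2"
  unfolding power2_norm_eq_inner inner_weight_map
  by (simp add: phi_def quadratic_form_eq power2_eq_square)

lemma inner_weight_map_axis:
  "weight_map z \<bullet> weight_map (axis i 1) = (\<Sum>X\<in>B. (\<Sum>j\<in>UNIV. z $ j * eigenvalue X j) * eigenvalue X i)"
proof -
  have "(\<Sum>j\<in>UNIV. axis i 1 $ j * eigenvalue X j) = (\<Sum>j\<in>UNIV. if j = i then eigenvalue X j else 0)" for X
    by (intro sum.cong refl) (simp add: axis_def)
  then show ?thesis
    by (simp add: inner_weight_map)
qed

lemma grad_phi_eq:
  "grad_phi B x = 4 *\<^sub>R (\<Sum>i\<in>UNIV.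
     ((x \<bullet> e i) * (weight_map (squared_coordinates x) \<bullet> weight_map (axis i 1))) *\<^sub>R e i)"
proof -
  have "(\<Sum>X\<in>B. ((X *v x) \<bullet> x) *\<^sub>R (X *v x))
      = (\<Sum>X\<in>B. \<Sum>i\<in>UNIV. ((X *v x) \<bullet> x * ((x \<bullet> e i) * eigenvalue X i)) *\<^sub>R e i)"
    by (intro sum.cong refl) (simp add: matrix_vector_mult_expansion scaleR_sum_right)
  also have "\<dots> = (\<Sum>i\<in>UNIV. \<Sum>X\<in>B. ((X *v x) \<bullet> x * ((x \<bullet> e i) * eigenvalue X i)) *\<^sub>R e i)"
    by (rule sum.swap)
  also have "\<dots> = (\<Sum>i\<in>UNIV.
      ((x \<bullet> e i) * (weight_map (squared_coordinates x) \<bullet> weight_map (axis i 1))) *\<^sub>R e i)"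
    by (intro sum.cong refl)
      (simp add: inner_weight_map_axis quadratic_form_eq sum_distrib_left mult_ac flip: scaleR_sum_left)
  finally show ?thesis
    by (simp add: grad_phi_def)
qed

lemma norm_grad_phi_sq:
  "(norm (grad_phi B x))\<^sup>2 = 16 * (\<Sum>i\<in>UNIV.
     (weight_map (squared_coordinates x) \<bullet> weight_map (axis i 1))\<^sup>2 * squared_coordinates x $ i)"
  unfolding grad_phi_eq power2_norm_eq_inner
  by (simp add: inner_sum_orthonormal orthonormal_e squared_coordinates_def power2_eq_square
      sum_distrib_left mult_ac)

lemma phi_cube_le_norm_grad_phi:
  assumes C: "\<And>z. \<forall>i. z $ i \<ge> 0
              \<Longrightarrow> norm (weight_map z) ^ 3 \<le> C * (\<Sum>i\<in>UNIV. (weight_map z \<bullet> weight_map (axis i 1))\<^sup>2 * z $ i)"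
  shows "phi B x ^ 3 \<le> (C / 16)\<^sup>2 * norm (grad_phi B x) ^ 4"
proof -
  define z where "z = squared_coordinates x"
  define Q where "Q = (\<Sum>i\<in>UNIV. (weight_map z \<bullet> weight_map (axis i 1))\<^sup>2 * z $ i)"
  have "phi B x ^ 3 = (norm (weight_map z) ^ 3)\<^sup>2"
    by (simp add: phi_eq_norm_weight_map z_def flip: power_mult)
  also have "\<dots> \<le> (C * Q)\<^sup>2"
    using C[of z] by (intro power_mono) (simp_all add: z_def Q_def squared_coordinates_def)
  also have "\<dots> = (C / 16)\<^sup>2 * (16 * Q)\<^sup>2"
    by (simp add: power2_eq_square)
  also have "16 * Q = (norm (grad_phi B x))\<^sup>2"
    by (simp add: norm_grad_phi_sq z_def Q_def)
  finally show ?thesis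
    by (simp flip: power_mult)
qed

end

lemma le_powr_if_cube_le:
  fixes p g c :: real
  assumes "p \<ge> 0" "g \<ge> 0" "c > 0" "p ^ 3 \<le> c\<^sup>2 * g ^ 4"
  shows "p \<le> c powr (2/3) * g powr (4/3)"
proof -
  have "p = (p powr 3) powr (1/3)"
    using assms(1) by (simp add: powr_powr del: powr_numeral)
  also have "p powr 3 = p ^ 3"
    using assms(1) by (rule powr_numeral)
  also have "(p ^ 3) powr (1/3) \<le> (c\<^sup>2 * g ^ 4) powr (1/3)"
    using assms by (intro powr_mono2) simp_all
  also have "c\<^sup>2 * g ^ 4 = c powr 2 * g powr 4"
    using assms by (simp add: powr_numeral)
  also have "(c powr 2 * g powr 4) powr (1/3) = c powr (2/3) * g powr (4/3)"
    by (simp add: powr_mult powr_powr)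
  finally show ?thesis .
qed

theorem mainTheorem19:
  fixes G :: "'n::finite mat set" and B :: "'n mat set"
  assumes "closed_subgroup_GL G"
    and "\<forall>A\<in>G. transpose A \<in> G"
    and "\<forall>A\<in>G. \<forall>A'\<in>G. A ** A' = A' ** A"
    and "orthonormal_basis B (sym_part G)"
  shows "\<exists>C>0. \<forall>x :: real ^ 'n. C * norm (grad_phi B x) powr (4/3) \<ge> phi B x"
proof -
  have "B \<subseteq> sym_part G"
    using assms(4) by (simp add: orthonormal_basis_def)
  then have "\<forall>X\<in>B. transpose X = X"
    by (auto simp: sym_part_def)
  moreover have "\<forall>X\<in>B. \<forall>Y\<in>B. X ** Y = Y ** X"
    using \<open>B \<subseteq> sym_part G\<close> by (intro ballI sym_part_commute[OF assms(3)]) auto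
  ultimately obtain e :: "'n \<Rightarrow> real^'n" where "\<And>i j. e i \<bullet> e j = (if i = j then 1 else 0)"
    and "\<And>i X. X \<in> B \<Longrightarrow> \<exists>l. X *v e i = l *\<^sub>R e i"
    using commuting_symmetric_matrices_common_eigenbasis[OF orthonormal_basis_finite[OF assms(4)]]
    by blast
  then interpret common_eigenbasis B e
    using orthonormal_basis_finite[OF assms(4)] orthonormal_basis_inner[OF assms(4)]
    by unfold_locales
  obtain C where "C > 0" and C: "\<And>z. \<forall>i. z $ i \<ge> 0 \<Longrightarrow> norm (weight_map z) ^ 3
      \<le> C * (\<Sum>i\<in>UNIV. (weight_map z \<bullet> weight_map (axis i 1))\<^sup>2 * z $ i)"
    using linear_orthant_cubic_bound[OF linear_weight_map] by blast
  have "phi B x \<le> (C / 16) powr (2/3) * norm (grad_phi B x) powr (4/3)" for x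
    using \<open>C > 0\<close> phi_cube_le_norm_grad_phi[OF C]
    by (intro le_powr_if_cube_le) (simp_all add: phi_def sum_nonneg)
  with \<open>C > 0\<close> show ?thesis
    by (intro exI[of _ "(C / 16) powr (2/3)"]) simp
qed

end
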